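(* Let $H$ be a non-trivial connected core. Then there exist a graph $F$ and vertices $u^*,v^*\in V(F)$ such that (a) for all distinct $x,y\in V(H)$ there is a homomorphism $f\colon F\to H$ with $f(u^* )=x$ and $f(v^* )=y$, and (b) every homomorphism $f\colon F\to H$ satisfies $f(u^* )\ne f(v^* )$, if and only if $H$ is projective.
   Context: Graphs are finite, undirected, without parallel edges, loops allowed; $K_1^*$ is the one-vertex graph with a loop. A homomorphism is an edge-preserving vertex map. A core is a graph with no homomorphism to a proper subgraph of itself; it is trivial if isomorphic to $K_1$, $K_1^*$ or $K_2$, non-trivial otherwise. The direct product $H_1\times H_2$ has vertex set $V(H_1)\times V(H_2)$ with $(x_1,y_1)(x_2,y_2)$ an edge iff $x_1x_2\in E(H_1)$ and $y_1y_2\in E(H_2)$; $H^m$ is the $m$-fold product and $\pi_i(x_1,\dots,x_m)=x_i$. A homomorphism $f\colon H^m\to H$ is idempotent if $f(x,\dots,x)=x$ for all $x$. $H$ is projective if for every $m\ge2$ every idempotent homomorphism $H^m\to H$ equals some $\pi_i$. One may use the theorem of Larose and Tardif: a graph with at least three vertices is projective iff every subset $C\subseteq V(H)$ is constructible, where $C$ is constructible if there are a graph $K$, vertices $x_0,\dots,x_\ell\in V(K)$ and $y_1,\dots,y_\ell\in V(H)$ such that $C=\{y\in V(H):\exists f\colon K\to H \text{ with } f(x_i)=y_i\ (i\in[\ell]) \text{ and } f(x_0)=y\}$. *)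

theory Defs
  imports Main "HOL-Library.FuncSet"
begin

record 'a ugraph =
  verts :: "'a set"
  adj :: "'a \<Rightarrow> 'a \<Rightarrow> bool"

definition wf_graph :: "'a ugraph \<Rightarrow> bool" where
  "wf_graph G \<longleftrightarrow> finite (verts G)
     \<and> (\<forall>x y. adj G x y \<longrightarrow> x \<in> verts G \<and> y \<in> verts G)
     \<and> (\<forall>x y. adj G x y \<longrightarrow> adj G y x)"

definition hom :: "'a ugraph \<Rightarrow> 'b ugraph \<Rightarrow> ('a \<Rightarrow> 'b) \<Rightarrow> bool" where
  "hom G H f \<longleftrightarrow> (\<forall>x\<in>verts G. f x \<in> verts H)
     \<and> (\<forall>x y. adj G x y \<longrightarrow> adj H (f x) (f y))"

definition subgraph :: "'a ugraph \<Rightarrow> 'a ugraph \<Rightarrow> bool" where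
  "subgraph G' G \<longleftrightarrow> wf_graph G' \<and> verts G' \<subseteq> verts G
     \<and> (\<forall>x y. adj G' x y \<longrightarrow> adj G x y)"

definition core :: "'a ugraph \<Rightarrow> bool" where
  "core H \<longleftrightarrow> wf_graph H
     \<and> \<not> (\<exists>H' f. subgraph H' H \<and> H' \<noteq> H \<and> hom H H' f)"

definition graph_iso :: "'a ugraph \<Rightarrow> 'b ugraph \<Rightarrow> bool" where
  "graph_iso G H \<longleftrightarrow> (\<exists>f. bij_betw f (verts G) (verts H)
     \<and> (\<forall>x\<in>verts G. \<forall>y\<in>verts G. adj G x y \<longleftrightarrow> adj H (f x) (f y)))"

definition K1 :: "unit ugraph" where
  "K1 = \<lparr>verts = {()}, adj = (\<lambda>x y. False)\<rparr>"

definition K1_loop :: "unit ugraph" where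
  "K1_loop = \<lparr>verts = {()}, adj = (\<lambda>x y. True)\<rparr>"

definition K2 :: "bool ugraph" where
  "K2 = \<lparr>verts = UNIV, adj = (\<lambda>x y. x \<noteq> y)\<rparr>"

definition trivial_graph :: "'a ugraph \<Rightarrow> bool" where
  "trivial_graph H \<longleftrightarrow> graph_iso H K1 \<or> graph_iso H K1_loop \<or> graph_iso H K2"

definition connected :: "'a ugraph \<Rightarrow> bool" where
  "connected H \<longleftrightarrow> verts H \<noteq> {}
     \<and> (\<forall>x\<in>verts H. \<forall>y\<in>verts H. (adj H)\<^sup>*\<^sup>* x y)"

definition power :: "'a ugraph \<Rightarrow> nat \<Rightarrow> (nat \<Rightarrow> 'a) ugraph" where
  "power H m = \<lparr>verts = PiE {..<m} (\<lambda>_. verts H),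
     adj = (\<lambda>x y. x \<in> PiE {..<m} (\<lambda>_. verts H) \<and> y \<in> PiE {..<m} (\<lambda>_. verts H)
                 \<and> (\<forall>i<m. adj H (x i) (y i)))\<rparr>"

definition idempotent_hom :: "'a ugraph \<Rightarrow> nat \<Rightarrow> ((nat \<Rightarrow> 'a) \<Rightarrow> 'a) \<Rightarrow> bool" where
  "idempotent_hom H m f \<longleftrightarrow> hom (power H m) H f
     \<and> (\<forall>x\<in>verts H. f (\<lambda>i\<in>{..<m}. x) = x)"

definition projective :: "'a ugraph \<Rightarrow> bool" where
  "projective H \<longleftrightarrow> (\<forall>m\<ge>2. \<forall>f. idempotent_hom H m f \<longrightarrow>
     (\<exists>i<m. \<forall>x\<in>verts (power H m). f x = x i))"

end

theory Submission
  imports Defs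
begin

text \<open>The gadget \<open>(F, u, v)\<close> says that the relation \<open>\<noteq>\<close> on \<open>V(H)\<close> is primitive
  positive definable. If it exists, every idempotent homomorphism \<open>f : H\<^sup>m \<rightarrow> H\<close> preserves \<open>\<noteq>\<close>
  (apply \<open>f\<close> coordinatewise to homomorphisms \<open>F \<rightarrow> H\<close>), and on a set with at least three elements an
  idempotent operation preserving \<open>\<noteq>\<close> is a projection: the sets of coordinates that decide its value
  on two-valued tuples form a principal ultrafilter. Conversely, let \<open>m\<close> be the number of ordered pairs
  \<open>(x\<^sub>i, y\<^sub>i)\<close> of distinct vertices and take \<open>F = H\<^sup>m\<close>, \<open>u = (x\<^sub>i)\<^sub>i\<close>, \<open>v = (y\<^sub>i)\<^sub>i\<close>. Projections give (a).
  For (b), a homomorphism \<open>h : H\<^sup>m \<rightarrow> H\<close> restricts on the diagonal to an automorphism \<open>\<sigma>\<close> of the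
  core \<open>H\<close>; by projectivity \<open>\<sigma>\<^sup>-\<^sup>1 \<circ> h\<close> is a projection \<open>\<pi>\<^sub>i\<close>, so \<open>h u = \<sigma> x\<^sub>i \<noteq> \<sigma> y\<^sub>i = h v\<close>.
  A non-trivial connected core has at least three vertices, so both directions apply.\<close>

lemma conservative_binary_op_is_projection:
  fixes g :: "'a \<Rightarrow> 'a \<Rightarrow> 'a"
  assumes conservative: "\<And>x y. x \<in> V \<Longrightarrow> y \<in> V \<Longrightarrow> g x y = x \<or> g x y = y"
    and swap: "\<And>x y. x \<in> V \<Longrightarrow> y \<in> V \<Longrightarrow> x \<noteq> y \<Longrightarrow> g x y \<noteq> g y x"
    and rotate: "\<And>x y z. x \<in> V \<Longrightarrow> y \<in> V \<Longrightarrow> z \<in> V \<Longrightarrow> x \<noteq> y \<Longrightarrow> z \<noteq> x \<Longrightarrow> z \<noteq> y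
                   \<Longrightarrow> g x y \<noteq> g z x"
  shows "(\<forall>x\<in>V. \<forall>y\<in>V. x \<noteq> y \<longrightarrow> g x y = x) \<or> (\<forall>x\<in>V. \<forall>y\<in>V. x \<noteq> y \<longrightarrow> g x y = y)"
proof (rule ccontr)
  have first_swap: "g y x = y" if "g x y = x" "x \<in> V" "y \<in> V" "x \<noteq> y" for x y
    using swap[of x y] conservative[of y x] that by auto
  have first_rotate: "g z x = z"
    if "g x y = x" "x \<in> V" "y \<in> V" "z \<in> V" "x \<noteq> y" "z \<noteq> x" "z \<noteq> y" for x y z
    using rotate[of x y z] conservative[of z x] that by auto
  assume "\<not> ?thesis"
  then obtain p q where pq: "p \<in> V" "q \<in> V" "p \<noteq> q" "g p q \<noteq> p"
    and "\<exists>a\<in>V. \<exists>b\<in>V. a \<noteq> b \<and> g a b \<noteq> b" by blast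
  then obtain a b where ab: "a \<in> V" "b \<in> V" "a \<noteq> b" "g a b = a"
    using conservative by blast
  have into_a: "g z a = z" if "z \<in> V" "z \<noteq> a" for z
    using first_swap[of a b] first_rotate[of a b z] ab that by (cases "z = b") auto
  have from_a: "g a z = a" if "z \<in> V" "z \<noteq> a" for z
    using first_swap[OF into_a[OF that]] that ab by auto
  have "g p q = p"
  proof (cases "p = a")
    case True
    then show ?thesis using from_a pq by simp
  next
    case False
    then show ?thesis
      using into_a[of p] first_rotate[of q a p] into_a[of q] pq ab by (cases "q = a") auto
  qed
  with pq show False by simp
qed

definition mix_tuple :: "nat \<Rightarrow> nat set \<Rightarrow> 'a \<Rightarrow> 'a \<Rightarrow> nat \<Rightarrow> 'a" where
  "mix_tuple m S x y = (\<lambda>i\<in>{..<m}. if i \<in> S then x else y)"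

lemma mix_tuple_swap: "mix_tuple m ({..<m} - S) x y = mix_tuple m S y x"
  by (auto simp: mix_tuple_def)

locale idempotent_neq_polymorphism =
  fixes V :: "'a set" and m :: nat and f :: "(nat \<Rightarrow> 'a) \<Rightarrow> 'a"
  assumes three_elements: "\<exists>a\<in>V. \<exists>b\<in>V. \<exists>c\<in>V. a \<noteq> b \<and> a \<noteq> c \<and> b \<noteq> c"
    and closed: "t \<in> PiE {..<m} (\<lambda>_. V) \<Longrightarrow> f t \<in> V"
    and preserves_neq: "t \<in> PiE {..<m} (\<lambda>_. V) \<Longrightarrow> s \<in> PiE {..<m} (\<lambda>_. V)
                          \<Longrightarrow> \<forall>i<m. t i \<noteq> s i \<Longrightarrow> f t \<noteq> f s"
    and idempotent: "x \<in> V \<Longrightarrow> f (\<lambda>i\<in>{..<m}. x) = x"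
begin

abbreviation tuples :: "(nat \<Rightarrow> 'a) set" where
  "tuples \<equiv> PiE {..<m} (\<lambda>_. V)"

lemma const_tuple: "x \<in> V \<Longrightarrow> (\<lambda>i\<in>{..<m}. x) \<in> tuples"
  by (simp add: restrict_PiE_iff)

lemma mix_tuple_in: "x \<in> V \<Longrightarrow> y \<in> V \<Longrightarrow> mix_tuple m S x y \<in> tuples"
  by (simp add: mix_tuple_def restrict_PiE_iff)

lemma conservative: "t \<in> tuples \<Longrightarrow> f t \<in> t ` {..<m}"
  using preserves_neq[of t "\<lambda>i\<in>{..<m}. f t"] closed[of t] const_tuple idempotent by force

lemma mix_value: "x \<in> V \<Longrightarrow> y \<in> V \<Longrightarrow> f (mix_tuple m S x y) = x \<or> f (mix_tuple m S x y) = y"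
  using conservative[OF mix_tuple_in] by (auto simp: mix_tuple_def split: if_splits)

lemma mix_neq:
  assumes "x \<in> V" "y \<in> V" "x' \<in> V" "y' \<in> V"
    and "\<And>i. i < m \<Longrightarrow> (if i \<in> S then x else y) \<noteq> (if i \<in> S' then x' else y')"
  shows "f (mix_tuple m S x y) \<noteq> f (mix_tuple m S' x' y')"
  using assms by (intro preserves_neq mix_tuple_in) (auto simp: mix_tuple_def)

text \<open>The decisive sets form a principal ultrafilter on the coordinates; its generator is the
  coordinate \<open>f\<close> projects to.\<close>

definition decisive :: "nat set \<Rightarrow> bool" where
  "decisive S \<longleftrightarrow> S \<subseteq> {..<m} \<and> (\<forall>x\<in>V. \<forall>y\<in>V. x \<noteq> y \<longrightarrow> f (mix_tuple m S x y) = x)"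

lemma decisive_or_complement:
  assumes "S \<subseteq> {..<m}"
  shows "decisive S \<or> decisive ({..<m} - S)"
proof -
  have "(\<forall>x\<in>V. \<forall>y\<in>V. x \<noteq> y \<longrightarrow> f (mix_tuple m S x y) = x)
      \<or> (\<forall>x\<in>V. \<forall>y\<in>V. x \<noteq> y \<longrightarrow> f (mix_tuple m S x y) = y)"
  proof (rule conservative_binary_op_is_projection)
    show "f (mix_tuple m S x y) = x \<or> f (mix_tuple m S x y) = y" if "x \<in> V" "y \<in> V" for x y
      using mix_value that by blast
    show "f (mix_tuple m S x y) \<noteq> f (mix_tuple m S y x)" if "x \<in> V" "y \<in> V" "x \<noteq> y" for x y
      using that by (intro mix_neq) auto
    show "f (mix_tuple m S x y) \<noteq> f (mix_tuple m S z x)"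
      if "x \<in> V" "y \<in> V" "z \<in> V" "x \<noteq> y" "z \<noteq> x" "z \<noteq> y" for x y z
      using that by (intro mix_neq) auto
  qed
  then show ?thesis
    using assms by (auto simp: decisive_def mix_tuple_swap)
qed

lemma decisive_disjoint:
  assumes "decisive A" "decisive B"
  shows "A \<inter> B \<noteq> {}"
proof
  assume disjoint: "A \<inter> B = {}"
  obtain a b c where abc: "a \<in> V" "b \<in> V" "c \<in> V" "a \<noteq> b" "a \<noteq> c" "b \<noteq> c"
    using three_elements by blast
  have "f (mix_tuple m A a b) \<noteq> f (mix_tuple m B a c)"
    using abc disjoint by (intro mix_neq) auto
  with assms abc show False by (simp add: decisive_def)
qed

lemma agreement_set_decisive:
  assumes t: "t \<in> tuples"
  shows "decisive {i. i < m \<and> t i = f t}"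
proof -
  define x where "x = f t"
  define S where "S = {i. i < m \<and> t i = x}"
  have x: "x \<in> V" using closed t by (simp add: x_def)
  obtain y where y: "y \<in> V" "y \<noteq> x" using three_elements by metis
  have "\<forall>i<m. t i \<noteq> mix_tuple m S y x i"
    using y by (auto simp: mix_tuple_def S_def)
  then have "f (mix_tuple m S y x) \<noteq> x"
    using preserves_neq[OF t mix_tuple_in[OF y(1) x, of S]] by (auto simp: x_def)
  then have "f (mix_tuple m S y x) = y" using mix_value[OF y(1) x] by auto
  then have "f (mix_tuple m S x y) = x"
    using mix_value[OF x y(1), of S] mix_neq[of x y y x S S] x y by auto
  then have "f (mix_tuple m ({..<m} - S) y x) \<noteq> y"
    using y by (simp add: mix_tuple_swap)
  then have "\<not> decisive ({..<m} - S)"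
    using x y unfolding decisive_def by blast
  then show ?thesis
    using decisive_or_complement[of S] by (auto simp: S_def x_def)
qed

lemma decisive_Int:
  assumes S: "decisive S" and T: "decisive T"
  shows "decisive (S \<inter> T)"
proof -
  obtain a b c where abc: "a \<in> V" "b \<in> V" "c \<in> V" "a \<noteq> b" "a \<noteq> c" "b \<noteq> c"
    using three_elements by blast
  have sub: "S \<subseteq> {..<m}" "T \<subseteq> {..<m}" using S T by (auto simp: decisive_def)
  define t where "t = (\<lambda>i\<in>{..<m}. if i \<in> S then if i \<in> T then a else b else c)"
  have t_in: "t \<in> tuples" using abc by (simp add: t_def restrict_PiE_iff)
  have agree: "decisive {i. i < m \<and> t i = f t}"
    using agreement_set_decisive[OF t_in] .
  have "f t \<in> {a, b, c}"
    using conservative[OF t_in] by (auto simp: t_def split: if_splits)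
  moreover have "f t \<noteq> c"
  proof
    assume "f t = c"
    then have "{i. i < m \<and> t i = f t} = {..<m} - S" using abc by (auto simp: t_def)
    then show False using agree decisive_disjoint[OF S] by auto
  qed
  moreover have "f t \<noteq> b"
  proof
    assume "f t = b"
    then have "{i. i < m \<and> t i = f t} = S - T" using abc sub by (auto simp: t_def)
    then show False using agree decisive_disjoint[OF T] by auto
  qed
  ultimately have "{i. i < m \<and> t i = f t} = S \<inter> T" using abc sub by (auto simp: t_def)
  with agree show ?thesis by simp
qed

lemma decisive_singleton: "\<exists>i<m. decisive {i}"
proof -
  obtain a where a: "a \<in> V" using three_elements by blast
  have "decisive {i. i < m \<and> (\<lambda>i\<in>{..<m}. a) i = f (\<lambda>i\<in>{..<m}. a)}"
    using agreement_set_decisive[OF const_tuple[OF a]] .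
  moreover have "{i. i < m \<and> (\<lambda>i\<in>{..<m}. a) i = f (\<lambda>i\<in>{..<m}. a)} = {..<m}"
    using idempotent[OF a] by auto
  ultimately have "decisive {..<m}" by simp
  then obtain S where S: "decisive S" and least: "\<And>S'. decisive S' \<Longrightarrow> card S \<le> card S'"
    using ex_has_least_nat[of decisive _ card] by metis
  have sub: "S \<subseteq> {..<m}" using S by (simp add: decisive_def)
  obtain i where i: "i \<in> S" using decisive_disjoint[OF S S] by auto
  have "decisive {i}"
  proof (rule ccontr)
    assume "\<not> decisive {i}"
    then have "decisive (S \<inter> ({..<m} - {i}))"
      using decisive_or_complement[of "{i}"] decisive_Int[OF S] i sub by auto
    moreover have "S \<inter> ({..<m} - {i}) = S - {i}" using sub by auto
    moreover have "card (S - {i}) < card S"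
      using card_Diff1_less[OF finite_subset[OF sub] i] by simp
    ultimately show False using least by fastforce
  qed
  with i sub show ?thesis by blast
qed

theorem is_projection: "\<exists>i<m. \<forall>t\<in>tuples. f t = t i"
proof -
  obtain i where i: "i < m" "decisive {i}" using decisive_singleton by blast
  have "t i = f t" if "t \<in> tuples" for t
    using decisive_disjoint[OF i(2) agreement_set_decisive[OF that]] by auto
  with i show ?thesis by auto
qed

end

lemma hom_comp: "hom F G g \<Longrightarrow> hom G H h \<Longrightarrow> hom F H (h \<circ> g)"
  by (simp add: hom_def)

lemma hom_power_proj: "i < m \<Longrightarrow> hom (power H m) H (\<lambda>t. t i)"
  by (auto simp: hom_def power_def)

lemma hom_into_power:
  assumes "wf_graph F" and "\<And>i. i < m \<Longrightarrow> hom F H (g i)"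
  shows "hom F (power H m) (\<lambda>w. \<lambda>i\<in>{..<m}. g i w)"
  using assms by (auto simp: hom_def power_def wf_graph_def restrict_PiE_iff)

lemma hom_diagonal: "wf_graph H \<Longrightarrow> hom H (power H m) (\<lambda>x. \<lambda>i\<in>{..<m}. x)"
  by (auto simp: hom_def power_def wf_graph_def restrict_PiE_iff)

lemma wf_graph_power: "wf_graph H \<Longrightarrow> wf_graph (power H m)"
  by (auto simp: wf_graph_def power_def finite_PiE)

lemma ex_nat_copy:
  assumes "wf_graph G"
  obtains F :: "nat ugraph" and g ig
  where "wf_graph F" "hom F G g" "hom G F ig" "\<And>x. x \<in> verts G \<Longrightarrow> g (ig x) = x"
proof -
  define N where "N = card (verts G)"
  have "finite (verts G)" using assms by (simp add: wf_graph_def)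
  then obtain g where g: "bij_betw g {0..<N} (verts G)"
    unfolding N_def by (rule ex_bij_betw_nat_finite[THEN exE])
  define ig where "ig = inv_into {0..<N} g"
  define F where "F = \<lparr>verts = {0..<N}, adj = (\<lambda>x y. x < N \<and> y < N \<and> adj G (g x) (g y))\<rparr>"
  have surj: "g ` {0..<N} = verts G" using g by (simp add: bij_betw_def)
  have ig: "ig x \<in> {0..<N}" "g (ig x) = x" if "x \<in> verts G" for x
    unfolding ig_def using inv_into_into[of x g "{0..<N}"] f_inv_into_f[of x g "{0..<N}"] surj that
    by simp_all
  have "wf_graph F" using assms by (auto simp: wf_graph_def F_def)
  moreover have "hom F G g" using bij_betwE[OF g] by (auto simp: hom_def F_def)
  moreover have "hom G F ig"
    unfolding hom_def
  proof (intro conjI ballI allI impI)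
    show "ig x \<in> verts F" if "x \<in> verts G" for x using ig(1)[OF that] by (simp add: F_def)
    fix x y assume "adj G x y"
    moreover have "x \<in> verts G" "y \<in> verts G" using calculation assms by (auto simp: wf_graph_def)
    ultimately show "adj F (ig x) (ig y)" using ig by (simp add: F_def)
  qed
  ultimately show thesis using that ig(2) by blast
qed

lemma core_wf_graph: "core H \<Longrightarrow> wf_graph H"
  by (simp add: core_def)

lemma core_endomorphism_onto:
  assumes core: "core H" and s: "hom H H s"
  shows "s ` verts H = verts H"
    and "adj H p q \<Longrightarrow> \<exists>x y. adj H x y \<and> s x = p \<and> s y = q"
proof -
  have wf: "wf_graph H" using core by (rule core_wf_graph)
  define I :: "'a ugraph" where
    "I = \<lparr>verts = s ` verts H, adj = (\<lambda>p q. \<exists>x y. adj H x y \<and> s x = p \<and> s y = q)\<rparr>"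
  have edge: "\<exists>x\<in>verts H. \<exists>y\<in>verts H. adj H x y \<and> adj H y x \<and> s x = p \<and> s y = q"
    if pq: "adj I p q" for p q
  proof -
    obtain x y where "adj H x y" "s x = p" "s y = q" using pq by (auto simp: I_def)
    with wf show ?thesis unfolding wf_graph_def by blast
  qed
  have "subgraph I H"
    unfolding subgraph_def wf_graph_def
  proof (intro conjI allI impI)
    show "finite (verts I)" using wf by (simp add: wf_graph_def I_def)
    show "verts I \<subseteq> verts H" using s by (auto simp: hom_def I_def)
    fix p q assume "adj I p q"
    with edge obtain x y where "x \<in> verts H" "y \<in> verts H" "adj H x y" "adj H y x" "s x = p" "s y = q"
      by blast
    then show "p \<in> verts I" "q \<in> verts I" "adj I q p" "adj H p q"
      using s by (auto simp: I_def hom_def)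
  qed
  moreover have "hom H I s" by (auto simp: hom_def I_def)
  ultimately have "I = H" using core unfolding core_def by blast
  then have "verts I = verts H" "adj I = adj H" by simp_all
  then show "s ` verts H = verts H" by (simp add: I_def)
  show "\<exists>x y. adj H x y \<and> s x = p \<and> s y = q" if "adj H p q"
  proof -
    have "adj I p q" using that \<open>adj I = adj H\<close> by simp
    then show ?thesis by (simp add: I_def)
  qed
qed

lemma core_endomorphism_bij:
  assumes "core H" "hom H H s"
  shows "bij_betw s (verts H) (verts H)"
  using core_endomorphism_onto(1)[OF assms] core_wf_graph[OF assms(1)]
  by (simp add: bij_betw_def wf_graph_def finite_surj_inj)

lemma core_endomorphism_inv_hom:
  assumes "core H" "hom H H s"
  shows "hom H H (inv_into (verts H) s)"
  unfolding hom_def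
proof (intro conjI allI impI ballI)
  have bij: "bij_betw s (verts H) (verts H)" by (rule core_endomorphism_bij[OF assms])
  show "inv_into (verts H) s x \<in> verts H" if "x \<in> verts H" for x
    using bij that by (metis bij_betw_imp_surj_on inv_into_into)
  fix p q assume "adj H p q"
  then obtain x y where "adj H x y" "s x = p" "s y = q"
    using core_endomorphism_onto(2)[OF assms] by blast
  moreover have "x \<in> verts H" "y \<in> verts H"
    using \<open>adj H x y\<close> core_wf_graph[OF assms(1)] by (auto simp: wf_graph_def)
  ultimately show "adj H (inv_into (verts H) s p) (inv_into (verts H) s q)"
    using bij by (auto simp: bij_betw_def)
qed

text \<open>If \<open>h\<close> restricted to the diagonal is \<open>\<sigma>\<close>, an automorphism of the core, then
  \<open>\<sigma>\<^sup>-\<^sup>1 \<circ> h\<close> is idempotent, hence a projection.\<close>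
lemma hom_power_factors_through_projection:
  assumes core: "core H" and proj: "projective H" and "2 \<le> m"
    and h: "hom (power H m) H h"
  shows "\<exists>i<m. \<forall>t\<in>verts (power H m). h t = h (\<lambda>j\<in>{..<m}. t i)"
proof -
  define diag :: "'a \<Rightarrow> nat \<Rightarrow> 'a" where "diag x = (\<lambda>j\<in>{..<m}. x)" for x
  define \<sigma> where "\<sigma> = h \<circ> diag"
  define \<tau> where "\<tau> = inv_into (verts H) \<sigma>"
  have \<sigma>: "hom H H \<sigma>"
    unfolding \<sigma>_def diag_def by (rule hom_comp[OF hom_diagonal[OF core_wf_graph[OF core]] h])
  have bij: "bij_betw \<sigma> (verts H) (verts H)" by (rule core_endomorphism_bij[OF core \<sigma>])
  have "idempotent_hom H m (\<tau> \<circ> h)"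
    unfolding idempotent_hom_def
  proof
    show "hom (power H m) H (\<tau> \<circ> h)"
      unfolding \<tau>_def by (rule hom_comp[OF h core_endomorphism_inv_hom[OF core \<sigma>]])
    have "\<tau> (\<sigma> x) = x" if "x \<in> verts H" for x
      using bij that by (simp add: \<tau>_def bij_betw_def)
    then show "\<forall>x\<in>verts H. (\<tau> \<circ> h) (\<lambda>i\<in>{..<m}. x) = x"
      by (simp add: \<sigma>_def diag_def)
  qed
  then obtain i where i: "i < m" "\<forall>t\<in>verts (power H m). (\<tau> \<circ> h) t = t i"
    using proj \<open>2 \<le> m\<close> unfolding projective_def by blast
  have "h t = h (diag (t i))" if "t \<in> verts (power H m)" for t
  proof -
    have "h t \<in> verts H" using h that by (simp add: hom_def)
    then have "h t = \<sigma> (\<tau> (h t))"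
      using bij by (simp add: \<tau>_def bij_betw_def f_inv_into_f)
    with i that show ?thesis by (simp add: \<sigma>_def)
  qed
  with i show ?thesis by (auto simp: diag_def)
qed

definition neq_gadget :: "'b ugraph \<Rightarrow> 'a ugraph \<Rightarrow> 'b \<Rightarrow> 'b \<Rightarrow> bool" where
  "neq_gadget F H u v \<longleftrightarrow> wf_graph F \<and> u \<in> verts F \<and> v \<in> verts F
     \<and> (\<forall>x\<in>verts H. \<forall>y\<in>verts H. x \<noteq> y \<longrightarrow> (\<exists>f. hom F H f \<and> f u = x \<and> f v = y))
     \<and> (\<forall>f. hom F H f \<longrightarrow> f u \<noteq> f v)"

lemma neq_gadget_nat_copy:
  assumes "neq_gadget G H u v"
  shows "\<exists>(F :: nat ugraph) u' v'. neq_gadget F H u' v'"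
proof -
  obtain F :: "nat ugraph" and g ig where F: "wf_graph F" "hom F G g" "hom G F ig"
    and g_ig: "\<And>x. x \<in> verts G \<Longrightarrow> g (ig x) = x"
    using ex_nat_copy assms unfolding neq_gadget_def by metis
  have "neq_gadget F H (ig u) (ig v)"
    unfolding neq_gadget_def
  proof (intro conjI ballI impI allI)
    show "wf_graph F" by (rule F(1))
    show "ig u \<in> verts F" "ig v \<in> verts F" using F(3) assms by (auto simp: hom_def neq_gadget_def)
    show "\<exists>f. hom F H f \<and> f (ig u) = x \<and> f (ig v) = y"
      if xy: "x \<in> verts H" "y \<in> verts H" "x \<noteq> y" for x y
    proof -
      obtain f where "hom G H f" "f u = x" "f v = y"
        using assms xy unfolding neq_gadget_def by blast
      then show ?thesis
        using hom_comp[OF F(2)] g_ig assms by (intro exI[of _ "f \<circ> g"]) (simp add: neq_gadget_def)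
    qed
    show "f (ig u) \<noteq> f (ig v)" if "hom F H f" for f
      using hom_comp[OF F(3) that] assms by (auto simp: neq_gadget_def)
  qed
  then show ?thesis by blast
qed

lemma power_neq_gadget:
  assumes core: "core H" and proj: "projective H" and "2 \<le> m"
    and e: "bij_betw e {..<m} {(x, y). x \<in> verts H \<and> y \<in> verts H \<and> x \<noteq> y}"
  shows "neq_gadget (power H m) H (\<lambda>i\<in>{..<m}. fst (e i)) (\<lambda>i\<in>{..<m}. snd (e i))"
    (is "neq_gadget _ H ?u ?v")
proof -
  have e_in: "fst (e i) \<in> verts H" "snd (e i) \<in> verts H" "fst (e i) \<noteq> snd (e i)" if "i < m" for i
    using bij_betwE[OF e] that by (fastforce simp: case_prod_beta)+
  have u: "?u \<in> verts (power H m)" and v: "?v \<in> verts (power H m)"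
    using e_in by (auto simp: power_def restrict_PiE_iff)
  show ?thesis
    unfolding neq_gadget_def
  proof (intro conjI ballI impI allI)
    show "wf_graph (power H m)" using core_wf_graph[OF core] by (rule wf_graph_power)
    show "?u \<in> verts (power H m)" "?v \<in> verts (power H m)" by (fact u, fact v)
    show "\<exists>f. hom (power H m) H f \<and> f ?u = x \<and> f ?v = y"
      if xy: "x \<in> verts H" "y \<in> verts H" "x \<noteq> y" for x y
    proof -
      have "(x, y) \<in> e ` {..<m}" using e xy by (simp add: bij_betw_def)
      then obtain i where "i < m" "e i = (x, y)" by auto
      then show ?thesis using hom_power_proj by (intro exI[of _ "\<lambda>t. t i"]) auto
    qed
    show "h ?u \<noteq> h ?v" if h: "hom (power H m) H h" for h
    proof -
      obtain i where i: "i < m" "\<forall>t\<in>verts (power H m). h t = h (\<lambda>j\<in>{..<m}. t i)"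
        using hom_power_factors_through_projection[OF core proj \<open>2 \<le> m\<close> h] by blast
      have "hom H H (h \<circ> (\<lambda>x. \<lambda>j\<in>{..<m}. x))"
        by (rule hom_comp[OF hom_diagonal[OF core_wf_graph[OF core]] h])
      then have inj: "inj_on (h \<circ> (\<lambda>x. \<lambda>j\<in>{..<m}. x)) (verts H)"
        using core_endomorphism_bij[OF core] by (simp add: bij_betw_def)
      have "h ?u = h (\<lambda>j\<in>{..<m}. fst (e i))" "h ?v = h (\<lambda>j\<in>{..<m}. snd (e i))"
        using bspec[OF i(2) u] bspec[OF i(2) v] i(1) by simp_all
      moreover have "h (\<lambda>j\<in>{..<m}. fst (e i)) \<noteq> h (\<lambda>j\<in>{..<m}. snd (e i))"
        using inj_onD[OF inj, of "fst (e i)" "snd (e i)"] e_in[OF i(1)] by auto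
      ultimately show ?thesis by simp
    qed
  qed
qed

lemma projective_core_has_neq_gadget:
  assumes core: "core H" and proj: "projective H"
    and ab: "a \<in> verts H" "b \<in> verts H" "a \<noteq> b"
  shows "\<exists>(F :: nat ugraph) u v. neq_gadget F H u v"
proof -
  define D where "D = {(x, y). x \<in> verts H \<and> y \<in> verts H \<and> x \<noteq> y}"
  have "finite D"
    using core_wf_graph[OF core]
    by (intro finite_subset[of D "verts H \<times> verts H"]) (auto simp: D_def wf_graph_def)
  then obtain e where e: "bij_betw e {0..<card D} D"
    using ex_bij_betw_nat_finite by blast
  have "{(a, b), (b, a)} \<subseteq> D" using ab by (auto simp: D_def)
  moreover have "card {(a, b), (b, a)} = 2" using ab by simp
  ultimately have "2 \<le> card D"
    using card_mono[OF \<open>finite D\<close>] by metis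
  then have "neq_gadget (power H (card D)) H
      (\<lambda>i\<in>{..<card D}. fst (e i)) (\<lambda>i\<in>{..<card D}. snd (e i))"
    using e unfolding atLeast0LessThan D_def by (rule power_neq_gadget[OF core proj])
  then show ?thesis by (rule neq_gadget_nat_copy)
qed

lemma neq_gadget_imp_projective:
  assumes three: "\<exists>a\<in>verts H. \<exists>b\<in>verts H. \<exists>c\<in>verts H. a \<noteq> b \<and> a \<noteq> c \<and> b \<noteq> c"
    and gadget: "neq_gadget F H u v"
  shows "projective H"
  unfolding projective_def
proof (intro allI impI)
  fix m :: nat and f assume "idempotent_hom H m f"
  then have f: "hom (power H m) H f" and idem: "\<And>x. x \<in> verts H \<Longrightarrow> f (\<lambda>i\<in>{..<m}. x) = x"
    by (auto simp: idempotent_hom_def)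
  interpret idempotent_neq_polymorphism "verts H" m f
  proof
    show "\<exists>a\<in>verts H. \<exists>b\<in>verts H. \<exists>c\<in>verts H. a \<noteq> b \<and> a \<noteq> c \<and> b \<noteq> c" by (fact three)
    show "f (\<lambda>i\<in>{..<m}. x) = x" if "x \<in> verts H" for x using that by (rule idem)
    show "f t \<in> verts H" if "t \<in> PiE {..<m} (\<lambda>_. verts H)" for t
      using f that by (simp add: hom_def power_def)
    show "f t \<noteq> f s"
      if t: "t \<in> PiE {..<m} (\<lambda>_. verts H)" and s: "s \<in> PiE {..<m} (\<lambda>_. verts H)"
        and ts: "\<forall>i<m. t i \<noteq> s i" for t s
    proof -
      have "\<exists>g. hom F H g \<and> g u = t i \<and> g v = s i" if "i < m" for i
      proof -
        have "t i \<in> verts H" "s i \<in> verts H" "t i \<noteq> s i" using t s ts that by auto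
        then show ?thesis using gadget unfolding neq_gadget_def by blast
      qed
      then obtain g where g: "\<And>i. i < m \<Longrightarrow> hom F H (g i) \<and> g i u = t i \<and> g i v = s i"
        by metis
      define G where "G w = (\<lambda>i\<in>{..<m}. g i w)" for w
      have "hom F H (f \<circ> G)"
        unfolding G_def using gadget g by (intro hom_comp[OF hom_into_power f]) (auto simp: neq_gadget_def)
      moreover have "G u = restrict t {..<m}" "G v = restrict s {..<m}"
        unfolding G_def using g by (auto intro: restrict_ext)
      then have "G u = t" "G v = s" using PiE_restrict[OF t] PiE_restrict[OF s] by simp_all
      ultimately show ?thesis using gadget by (auto simp: neq_gadget_def)
    qed
  qed
  show "\<exists>i<m. \<forall>x\<in>verts (power H m). f x = x i"
    using is_projection by (simp add: power_def)
qed

lemma core_loop_imp_singleton: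
  assumes core: "core H" and a: "a \<in> verts H" and loop: "adj H a a"
  shows "verts H = {a}"
proof (rule ccontr)
  define L :: "'a ugraph" where "L = \<lparr>verts = {a}, adj = (\<lambda>x y. x = a \<and> y = a)\<rparr>"
  assume "verts H \<noteq> {a}"
  then have "L \<noteq> H" using a by (auto simp: L_def)
  moreover have "subgraph L H" using a loop by (auto simp: subgraph_def wf_graph_def L_def)
  moreover have "hom H L (\<lambda>_. a)" by (simp add: hom_def L_def)
  ultimately show False using core by (auto simp: core_def)
qed

lemma connected_two_vertices_adj:
  assumes wf: "wf_graph H" and conn: "connected H" and V: "verts H = {a, b}" and "a \<noteq> b"
  shows "adj H a b"
proof (rule ccontr)
  assume no_edge: "\<not> adj H a b"
  have "y = a" if "(adj H)\<^sup>*\<^sup>* a y" for y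
    using that
  proof (induction rule: rtranclp_induct)
    case (step y z)
    then have "z \<in> verts H" using wf by (auto simp: wf_graph_def)
    with step no_edge V show ?case by auto
  qed simp
  with conn V \<open>a \<noteq> b\<close> show False by (auto simp: connected_def)
qed

lemma nontrivial_connected_core_three_vertices:
  assumes core: "core H" and conn: "connected H" and nontrivial: "\<not> trivial_graph H"
  shows "\<exists>a\<in>verts H. \<exists>b\<in>verts H. \<exists>c\<in>verts H. a \<noteq> b \<and> a \<noteq> c \<and> b \<noteq> c"
proof (rule ccontr)
  assume at_most_two: "\<not> ?thesis"
  have wf: "wf_graph H" using core by (rule core_wf_graph)
  obtain a where a: "a \<in> verts H" using conn by (auto simp: connected_def)
  show False
  proof (cases "verts H = {a}")
    case True
    then have "graph_iso H K1_loop \<or> graph_iso H K1"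
      unfolding graph_iso_def K1_loop_def K1_def
      by (cases "adj H a a") (auto intro!: exI[of _ "\<lambda>_. ()"] simp: bij_betw_def inj_on_def)
    with nontrivial show False by (auto simp: trivial_graph_def)
  next
    case False
    then obtain b where b: "b \<in> verts H" "b \<noteq> a" using a by blast
    have V: "verts H = {a, b}" using at_most_two a b by blast
    have "adj H a b" using connected_two_vertices_adj[OF wf conn V] b by simp
    moreover have "adj H b a" using calculation wf by (simp add: wf_graph_def)
    moreover have "\<not> adj H x x" if "x \<in> verts H" for x
      using core_loop_imp_singleton[OF core that] V b by auto
    ultimately have "adj H x y \<longleftrightarrow> x \<noteq> y" if "x \<in> verts H" "y \<in> verts H" for x y
      using that V by auto
    moreover have "bij_betw (\<lambda>x. x = a) (verts H) UNIV"
      using V b by (auto simp: bij_betw_def inj_on_def)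
    ultimately have "graph_iso H K2"
      unfolding graph_iso_def K2_def using V by (intro exI[of _ "\<lambda>x. x = a"]) auto
    with nontrivial show False by (auto simp: trivial_graph_def)
  qed
qed

theorem proposition12:
  fixes H :: "'a ugraph"
  assumes "core H" and "connected H" and "\<not> trivial_graph H"
  shows "(\<exists>(F :: nat ugraph) u v. wf_graph F \<and> u \<in> verts F \<and> v \<in> verts F
            \<and> (\<forall>x\<in>verts H. \<forall>y\<in>verts H. x \<noteq> y \<longrightarrow>
                 (\<exists>f. hom F H f \<and> f u = x \<and> f v = y))
            \<and> (\<forall>f. hom F H f \<longrightarrow> f u \<noteq> f v))
         \<longleftrightarrow> projective H"
proof -
  have three: "\<exists>a\<in>verts H. \<exists>b\<in>verts H. \<exists>c\<in>verts H. a \<noteq> b \<and> a \<noteq> c \<and> b \<noteq> c"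
    using nontrivial_connected_core_three_vertices[OF assms] .
  then obtain a b where ab: "a \<in> verts H" "b \<in> verts H" "a \<noteq> b" by blast
  show ?thesis
    unfolding neq_gadget_def[symmetric]
  proof
    show "projective H" if "\<exists>(F :: nat ugraph) u v. neq_gadget F H u v"
      using that by (elim exE) (rule neq_gadget_imp_projective[OF three])
    show "\<exists>(F :: nat ugraph) u v. neq_gadget F H u v" if "projective H"
      by (rule projective_core_has_neq_gadget[OF \<open>core H\<close> that ab])
  qed
qed

end
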